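(* Let $n>1$ be odd and $D_{2n}=\langle s,t\mid s^2=t^n=1,\ sts=t^{-1}\rangle$. Let $(u_i)_{i\in[1,m]}$ be a system of equations over $D_{2n}$, each $u_i$ a word over the constants $s,t,t^{-1}$ and variables $X_1^{\pm1},\dots,X_k^{\pm1}$. Let $w_i$ be the word obtained from $u_i$ by replacing each $X_j$ by $Y_{0,j}(Y_{1,j}tY_{1,j}^{-1})(Y_{2,j}tY_{2,j}^{-1})\cdots(Y_{n,j}tY_{n,j}^{-1})$ and each $X_j^{-1}$ by the formal inverse of that word, and then replacing $s,t,t^{\pm1}$ by letters $a,d,d^{\pm1}$ and each $Y_{i,j}^{\pm1}$ by $g_{i,j}^{\pm1}$. Let $G_o$ be the group with generators $a,d$ and $g_{i,j}$ ($i\in[0,n]$, $j\in[1,k]$) and relators $a^2$, $d^n$, $adad$, $w_i$ ($i\in[1,m]$), $[g,g']$, $[g,a]$, $g^2$ for all $g,g'\in\{g_{i,j}\}$. Then there is a surjective homomorphism $G_o\to D_{2n}$ if and only if the system $(u_i)_{i\in[1,m]}$ has a solution in $D_{2n}$.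
   Context: A solution of a system of equations over a group is an assignment of group elements $h_j$ to the variables $X_j$ (and $h_j^{-1}$ to $X_j^{-1}$) under which every equation evaluates to the identity. $[x,y]=xyx^{-1}y^{-1}$. *)

theory Defs
  imports "HOL-Algebra.Group"
begin

text \<open>A letter is a generator with a sign: (x, True) stands for x, (x, False) for x^-1.\<close>
type_synonym 'g word = "('g \<times> bool) list"

definition words_on :: "'g set \<Rightarrow> 'g word set" where
  "words_on X = {w. \<forall>l \<in> set w. fst l \<in> X}"

definition word_inv :: "'g word \<Rightarrow> 'g word" where
  "word_inv w = rev (map (\<lambda>(x, b). (x, \<not> b)) w)"

inductive_set pres_eq :: "'g set \<Rightarrow> 'g word set \<Rightarrow> ('g word \<times> 'g word) set"
  for X :: "'g set" and R :: "'g word set" where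
  refl: "w \<in> words_on X \<Longrightarrow> (w, w) \<in> pres_eq X R"
| sym: "(v, w) \<in> pres_eq X R \<Longrightarrow> (w, v) \<in> pres_eq X R"
| trans: "(u, v) \<in> pres_eq X R \<Longrightarrow> (v, w) \<in> pres_eq X R \<Longrightarrow> (u, w) \<in> pres_eq X R"
| cancel: "u \<in> words_on X \<Longrightarrow> v \<in> words_on X \<Longrightarrow> x \<in> X \<Longrightarrow>
     (u @ [(x, b), (x, \<not> b)] @ v, u @ v) \<in> pres_eq X R"
| rel: "u \<in> words_on X \<Longrightarrow> v \<in> words_on X \<Longrightarrow> r \<in> R \<Longrightarrow> r \<in> words_on X \<Longrightarrow>
     (u @ r @ v, u @ v) \<in> pres_eq X R"

definition presented_group :: "'g set \<Rightarrow> 'g word set \<Rightarrow> ('g word set) monoid" where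
  "presented_group X R =
     \<lparr> carrier = words_on X // pres_eq X R,
       mult = (\<lambda>A B. \<Union>a\<in>A. \<Union>b\<in>B. pres_eq X R `` {a @ b}),
       one = pres_eq X R `` {[]} \<rparr>"

definition word_eval :: "('a, 'm) monoid_scheme \<Rightarrow> ('g \<Rightarrow> 'a) \<Rightarrow> 'g word \<Rightarrow> 'a" where
  "word_eval G f w =
     foldr (\<lambda>(x, b) acc. (if b then f x else inv\<^bsub>G\<^esub> (f x)) \<otimes>\<^bsub>G\<^esub> acc) w \<one>\<^bsub>G\<^esub>"

datatype dgen = S | T

definition dihedral :: "nat \<Rightarrow> (dgen word set) monoid" where
  "dihedral n = presented_group {S, T}
     {[(S, True), (S, True)], replicate n (T, True),
      [(S, True), (T, True), (S, True), (T, True)]}"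

definition dconst :: "nat \<Rightarrow> dgen \<Rightarrow> dgen word set" where
  "dconst n c = pres_eq {S, T} {[(S, True), (S, True)], replicate n (T, True),
      [(S, True), (T, True), (S, True), (T, True)]} `` {[(c, True)]}"

text \<open>Equations: words over letters Inl c (constants s, t) and Inr j (variable X_j), signed.\<close>
type_synonym eqn = "(dgen + nat) word"

definition is_solution :: "nat \<Rightarrow> nat \<Rightarrow> (nat \<Rightarrow> eqn) \<Rightarrow> (nat \<Rightarrow> dgen word set) \<Rightarrow> bool" where
  "is_solution n m u h \<longleftrightarrow>
     (\<forall>i \<in> {1..m}. word_eval (dihedral n)
        (\<lambda>l. case l of Inl c \<Rightarrow> dconst n c | Inr j \<Rightarrow> h j) (u i) = \<one>\<^bsub>dihedral n\<^esub>)"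

datatype ogen = A | Dg | G nat nat

definition Xword :: "nat \<Rightarrow> nat \<Rightarrow> ogen word" where
  "Xword n j = (G 0 j, True) #
     concat (map (\<lambda>i. [(G i j, True), (Dg, True), (G i j, False)]) [1..<n+1])"

fun tr_letter :: "nat \<Rightarrow> (dgen + nat) \<times> bool \<Rightarrow> ogen word" where
  "tr_letter n (Inl S, b) = [(A, b)]"
| "tr_letter n (Inl T, b) = [(Dg, b)]"
| "tr_letter n (Inr j, True) = Xword n j"
| "tr_letter n (Inr j, False) = word_inv (Xword n j)"

definition tr_word :: "nat \<Rightarrow> eqn \<Rightarrow> ogen word" where
  "tr_word n u = concat (map (tr_letter n) u)"

definition commw :: "'g \<Rightarrow> 'g \<Rightarrow> 'g word" where
  "commw x y = [(x, True), (y, True), (x, False), (y, False)]"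

definition Ggens :: "nat \<Rightarrow> nat \<Rightarrow> ogen set" where
  "Ggens n k = {G i j | i j. i \<le> n \<and> 1 \<le> j \<and> j \<le> k}"

definition Go :: "nat \<Rightarrow> nat \<Rightarrow> nat \<Rightarrow> (nat \<Rightarrow> eqn) \<Rightarrow> (ogen word set) monoid" where
  "Go n k m u = presented_group ({A, Dg} \<union> Ggens n k)
     ({[(A, True), (A, True)], replicate n (Dg, True),
       [(A, True), (Dg, True), (A, True), (Dg, True)]}
      \<union> {tr_word n (u i) | i. i \<in> {1..m}}
      \<union> {commw g g' | g g'. g \<in> Ggens n k \<and> g' \<in> Ggens n k}
      \<union> {commw g A | g. g \<in> Ggens n k}
      \<union> {[(g, True), (g, True)] | g. g \<in> Ggens n k})"

end

(* The presented group D_2n is isomorphic to a concrete model, pairs (b, r) standing for s^b t^r,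
   so surjections onto D_2n and solutions in D_2n may be transported to the model.

   From a solution h: send a, d to s, t, send g_0j to the reflection part of h_j, and let
   exactly q_j of the g_ij with i >= 1 go to s.  As s t s^-1 = t^-1, the word X_j then evaluates
   to s^b t^(n - 2 q_j), and since n is odd, q_j can be chosen with n - 2 q_j = r (mod n).
   All relators of G_o hold, and the image contains s and t.

   From a surjection phi: alpha = phi(a) and delta = phi(d) satisfy the dihedral relations, so
   s -> alpha, t -> delta is an endomorphism theta of D_2n.  As n is odd, delta^n = 1 makes delta a
   rotation, and alpha is a reflection: otherwise alpha = delta = 1, and the pairwise commuting
   involutions phi(g_ij) would generate a group of order at most 2.  The phi(g_ij) are
   involutions commuting with the reflection alpha, so (n being odd) they lie in {1, alpha}.
   Hence theta is onto, so it is an automorphism, and h_j = theta^-1(phi(X_j)) solves the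
   system. *)

theory Submission
  imports Defs "HOL-Algebra.Generated_Groups"
begin

lemma words_on_Nil [simp]: "[] \<in> words_on X"
  by (simp add: words_on_def)

lemma words_on_Cons [simp]: "l # w \<in> words_on X \<longleftrightarrow> fst l \<in> X \<and> w \<in> words_on X"
  by (auto simp: words_on_def)

lemma words_on_append [simp]: "u @ w \<in> words_on X \<longleftrightarrow> u \<in> words_on X \<and> w \<in> words_on X"
  by (auto simp: words_on_def)

lemma words_on_word_inv [simp]: "word_inv w \<in> words_on X \<longleftrightarrow> w \<in> words_on X"
  by (auto simp: words_on_def word_inv_def)

lemma word_inv_Nil [simp]: "word_inv [] = []"
  by (simp add: word_inv_def)

lemma word_inv_Cons [simp]: "word_inv ((x, b) # w) = word_inv w @ [(x, \<not> b)]"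
  by (simp add: word_inv_def)

lemma word_inv_append [simp]: "word_inv (u @ w) = word_inv w @ word_inv u"
  by (simp add: word_inv_def)

lemma letters_word_inv: "\<forall>l \<in> set w. f (fst l) \<in> Y \<Longrightarrow> \<forall>l \<in> set (word_inv w). f (fst l) \<in> Y"
  by (auto simp: word_inv_def)

lemma pres_eq_imp_words_on: "(u, v) \<in> pres_eq X R \<Longrightarrow> u \<in> words_on X \<and> v \<in> words_on X"
  by (induct rule: pres_eq.induct) auto

lemma pres_eq_append_right:
  assumes "(u, v) \<in> pres_eq X R" and "w \<in> words_on X"
  shows "(u @ w, v @ w) \<in> pres_eq X R"
  using assms
proof (induct rule: pres_eq.induct)
  case (cancel u v x b)
  then show ?case using pres_eq.cancel[where u=u and v="v @ w" and X=X and R=R] by simp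
next
  case (rel u v r)
  then show ?case using pres_eq.rel[where u=u and v="v @ w" and X=X and R=R] by simp
qed (auto intro: pres_eq.intros)

lemma pres_eq_append_left:
  assumes "(u, v) \<in> pres_eq X R" and "w \<in> words_on X"
  shows "(w @ u, w @ v) \<in> pres_eq X R"
  using assms
proof (induct rule: pres_eq.induct)
  case (cancel u v x b)
  then show ?case using pres_eq.cancel[where u="w @ u" and v=v and X=X and R=R] by simp
next
  case (rel u v r)
  then show ?case using pres_eq.rel[where u="w @ u" and v=v and X=X and R=R] by simp
qed (auto intro: pres_eq.intros)

lemma pres_eq_append:
  assumes "(u, u') \<in> pres_eq X R" and "(v, v') \<in> pres_eq X R"
  shows "(u @ v, u' @ v') \<in> pres_eq X R"
  using assms pres_eq_imp_words_on pres_eq_append_left pres_eq_append_right pres_eq.trans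
  by metis

lemma equiv_pres_eq: "equiv (words_on X) (pres_eq X R)"
  unfolding equiv_def refl_on_def sym_def trans_def
  using pres_eq_imp_words_on by (auto intro: pres_eq.intros)

lemma pres_eq_word_inv_append: "w \<in> words_on X \<Longrightarrow> (word_inv w @ w, []) \<in> pres_eq X R"
proof (induct w)
  case (Cons l w)
  obtain x b where l: "l = (x, b)" by (cases l)
  have "(word_inv w @ [(x, \<not> b), (x, \<not> \<not> b)] @ w, word_inv w @ w) \<in> pres_eq X R"
    using Cons l by (intro pres_eq.cancel) auto
  with Cons l show ?case by (auto intro: pres_eq.trans)
qed (simp add: pres_eq.refl)

lemma carrier_presented_group: "carrier (presented_group X R) = words_on X // pres_eq X R"
  by (simp add: presented_group_def)

lemma one_presented_group: "\<one>\<^bsub>presented_group X R\<^esub> = pres_eq X R `` {[]}"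
  by (simp add: presented_group_def)

lemma class_in_carrier_presented_group:
  "w \<in> words_on X \<Longrightarrow> pres_eq X R `` {w} \<in> carrier (presented_group X R)"
  by (simp add: carrier_presented_group quotientI)

lemma carrier_presented_groupE:
  assumes "C \<in> carrier (presented_group X R)"
  obtains w where "w \<in> words_on X" and "C = pres_eq X R `` {w}"
  using assms by (auto simp: carrier_presented_group elim: quotientE)

lemma mult_presented_group_class:
  assumes "u \<in> words_on X" and "v \<in> words_on X"
  shows "pres_eq X R `` {u} \<otimes>\<^bsub>presented_group X R\<^esub> pres_eq X R `` {v} = pres_eq X R `` {u @ v}"
proof -
  let ?E = "pres_eq X R"
  have "?E `` {a @ b} = ?E `` {u @ v}" if "a \<in> ?E `` {u}" and "b \<in> ?E `` {v}" for a b
    using that pres_eq_append[of u a X R v b]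
    by (metis Image_singleton_iff equiv_class_eq[OF equiv_pres_eq] pres_eq.sym)
  then have "(\<Union>a\<in>?E `` {u}. \<Union>b\<in>?E `` {v}. ?E `` {a @ b}) =
      (\<Union>a\<in>?E `` {u}. \<Union>b\<in>?E `` {v}. ?E `` {u @ v})"
    by (intro SUP_cong refl) auto
  also have "\<dots> = ?E `` {u @ v}"
    using assms by (auto intro: pres_eq.refl)
  finally show ?thesis
    unfolding presented_group_def by simp
qed

lemma group_presented_group: "group (presented_group X R)"
proof (rule groupI)
  let ?P = "presented_group X R"
  fix x assume "x \<in> carrier ?P"
  then obtain w where w: "w \<in> words_on X" "x = pres_eq X R `` {w}"
    by (rule carrier_presented_groupE)
  have "pres_eq X R `` {word_inv w} \<otimes>\<^bsub>?P\<^esub> x = \<one>\<^bsub>?P\<^esub>"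
    using w by (simp add: mult_presented_group_class one_presented_group
        equiv_class_eq[OF equiv_pres_eq pres_eq_word_inv_append])
  then show "\<exists>y\<in>carrier ?P. y \<otimes>\<^bsub>?P\<^esub> x = \<one>\<^bsub>?P\<^esub>"
    using w class_in_carrier_presented_group[of "word_inv w"] by auto
next
  let ?P = "presented_group X R"
  fix x y z
  assume "x \<in> carrier ?P" "y \<in> carrier ?P" "z \<in> carrier ?P"
  then show "x \<otimes>\<^bsub>?P\<^esub> y \<otimes>\<^bsub>?P\<^esub> z = x \<otimes>\<^bsub>?P\<^esub> (y \<otimes>\<^bsub>?P\<^esub> z)"
    by (auto elim!: carrier_presented_groupE simp: mult_presented_group_class)
qed (auto elim!: carrier_presented_groupE
      simp: mult_presented_group_class one_presented_group class_in_carrier_presented_group)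

lemma inv_presented_group_class:
  "w \<in> words_on X \<Longrightarrow>
   inv\<^bsub>presented_group X R\<^esub> (pres_eq X R `` {w}) = pres_eq X R `` {word_inv w}"
  by (intro group.inv_equality[OF group_presented_group])
    (simp_all add: mult_presented_group_class one_presented_group class_in_carrier_presented_group
      equiv_class_eq[OF equiv_pres_eq pres_eq_word_inv_append])

lemma relator_class_eq_one:
  "r \<in> R \<Longrightarrow> r \<in> words_on X \<Longrightarrow> pres_eq X R `` {r} = \<one>\<^bsub>presented_group X R\<^esub>"
  using pres_eq.rel[where u="[]" and v="[]" and X=X and R=R]
  by (simp add: one_presented_group equiv_class_eq[OF equiv_pres_eq])

lemma word_eval_Nil [simp]: "word_eval K f [] = \<one>\<^bsub>K\<^esub>"
  by (simp add: word_eval_def)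

lemma word_eval_Cons [simp]:
  "word_eval K f ((x, b) # w) = (if b then f x else inv\<^bsub>K\<^esub> (f x)) \<otimes>\<^bsub>K\<^esub> word_eval K f w"
  by (simp add: word_eval_def)

context group
begin

lemma word_eval_in_subgroup:
  "subgroup K G \<Longrightarrow> \<forall>l \<in> set w. f (fst l) \<in> K \<Longrightarrow> word_eval G f w \<in> K"
  by (induct w) (auto simp: subgroup.one_closed subgroup.m_closed subgroup.m_inv_closed)

lemma word_eval_closed:
  "\<forall>l \<in> set w. f (fst l) \<in> carrier G \<Longrightarrow> word_eval G f w \<in> carrier G"
  by (rule word_eval_in_subgroup[OF subgroup_self])

lemma word_eval_append:
  "\<forall>l \<in> set u. f (fst l) \<in> carrier G \<Longrightarrow> \<forall>l \<in> set v. f (fst l) \<in> carrier G \<Longrightarrow>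
   word_eval G f (u @ v) = word_eval G f u \<otimes> word_eval G f v"
  by (induct u) (auto simp: m_assoc word_eval_closed)

lemma word_eval_word_inv:
  "\<forall>l \<in> set w. f (fst l) \<in> carrier G \<Longrightarrow> word_eval G f (word_inv w) = inv (word_eval G f w)"
proof (induct w)
  case (Cons l w)
  then have "\<forall>l \<in> set (word_inv w). f (fst l) \<in> carrier G"
    by (intro letters_word_inv) simp
  with Cons show ?case
    by (cases l) (simp add: word_eval_append word_eval_closed inv_mult_group)
qed simp

lemma word_eval_replicate:
  "f x \<in> carrier G \<Longrightarrow> word_eval G f (replicate k (x, True)) = f x [^] k"
  by (induct k) (simp_all flip: nat_pow_Suc2 del: nat_pow_Suc)

lemma word_eval_concat_map:
  assumes "\<forall>l \<in> set w. (\<forall>l' \<in> set (\<tau> l). f (fst l') \<in> carrier G) \<and> F (fst l) \<in> carrier G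
     \<and> word_eval G f (\<tau> l) = (if snd l then F (fst l) else inv (F (fst l)))"
  shows "word_eval G f (concat (map \<tau> w)) = word_eval G F w"
  using assms
proof (induct w)
  case (Cons l w)
  obtain x b where "l = (x, b)" by (cases l)
  moreover have "\<forall>l \<in> set (concat (map \<tau> w)). f (fst l) \<in> carrier G"
    using Cons(2) by auto
  ultimately show ?case
    using Cons by (simp add: word_eval_append)
qed simp

end

lemma word_eval_cong:
  "\<forall>l \<in> set w. f (fst l) = g (fst l) \<Longrightarrow> word_eval K f w = word_eval K g w"
  by (induct w) auto

lemma word_eval_hom:
  assumes "group K" and "group H" and "h \<in> hom K H" and "\<forall>l \<in> set w. f (fst l) \<in> carrier K"
  shows "h (word_eval K f w) = word_eval H (h \<circ> f) w"
proof -
  interpret group_hom K H h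
    using assms by (simp add: group_hom_def group_hom_axioms_def)
  show ?thesis
    using assms(4) by (induct w) (auto simp: G.word_eval_closed)
qed

lemma word_eval_generator_classes:
  "w \<in> words_on X \<Longrightarrow>
   word_eval (presented_group X R) (\<lambda>x. pres_eq X R `` {[(x, True)]}) w = pres_eq X R `` {w}"
proof (induct w)
  case (Cons l w)
  then show ?case
    by (cases l) (auto simp: inv_presented_group_class mult_presented_group_class)
qed (simp add: one_presented_group)

lemma generate_presented_group:
  "generate (presented_group X R) ((\<lambda>x. pres_eq X R `` {[(x, True)]}) ` X) =
   carrier (presented_group X R)"
  (is "generate ?P ?gens = _")
proof
  interpret group ?P by (rule group_presented_group)
  have gens: "?gens \<subseteq> carrier ?P"
    by (auto intro: class_in_carrier_presented_group)
  then show "generate ?P ?gens \<subseteq> carrier ?P"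
    by (rule generate_incl)
  show "carrier ?P \<subseteq> generate ?P ?gens"
  proof
    fix C assume "C \<in> carrier ?P"
    then obtain w where w: "w \<in> words_on X" "C = pres_eq X R `` {w}"
      by (rule carrier_presented_groupE)
    then have "word_eval ?P (\<lambda>x. pres_eq X R `` {[(x, True)]}) w \<in> generate ?P ?gens"
      by (intro word_eval_in_subgroup generate_is_subgroup gens)
        (auto simp: words_on_def intro: generate.incl)
    then show "C \<in> generate ?P ?gens"
      using w by (simp add: word_eval_generator_classes)
  qed
qed

lemma hom_presented_group_class:
  assumes "group H" and "h \<in> hom (presented_group X R) H" and "w \<in> words_on X"
  shows "h (pres_eq X R `` {w}) = word_eval H (\<lambda>x. h (pres_eq X R `` {[(x, True)]})) w"
proof -
  have "h (pres_eq X R `` {w}) =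
      h (word_eval (presented_group X R) (\<lambda>x. pres_eq X R `` {[(x, True)]}) w)"
    using assms(3) by (simp add: word_eval_generator_classes)
  also have "\<dots> = word_eval H (h \<circ> (\<lambda>x. pres_eq X R `` {[(x, True)]})) w"
    using assms by (intro word_eval_hom group_presented_group)
      (auto simp: words_on_def intro!: class_in_carrier_presented_group)
  finally show ?thesis
    by (simp add: comp_def)
qed

lemma hom_presented_group_relator:
  assumes "group H" and "h \<in> hom (presented_group X R) H" and "r \<in> R" and "r \<in> words_on X"
  shows "word_eval H (\<lambda>x. h (pres_eq X R `` {[(x, True)]})) r = \<one>\<^bsub>H\<^esub>"
  using hom_presented_group_class[OF assms(1,2,4)] relator_class_eq_one[OF assms(3,4)]
    group_hom.hom_one[of "presented_group X R" H h] assms(1,2)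
  by (simp add: group_hom_def group_hom_axioms_def group_presented_group)

lemma generate_surj_hom_presented_group:
  assumes "group H" and "h \<in> hom (presented_group X R) H"
    and "h ` carrier (presented_group X R) = carrier H"
  shows "generate H ((\<lambda>x. h (pres_eq X R `` {[(x, True)]})) ` X) = carrier H"
proof -
  interpret group_hom "presented_group X R" H h
    using assms by (simp add: group_hom_def group_hom_axioms_def group_presented_group)
  have "(\<lambda>x. h (pres_eq X R `` {[(x, True)]})) ` X = h ` (\<lambda>x. pres_eq X R `` {[(x, True)]}) ` X"
    by (simp add: image_comp comp_def)
  also have "generate H \<dots> = h ` carrier (presented_group X R)"
    by (subst generate_img)
      (auto intro: class_in_carrier_presented_group simp: generate_presented_group)
  finally show ?thesis using assms(3) by simp
qed

section \<open>Von Dyck's theorem\<close>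

definition presentation_lift :: "('a, 'm) monoid_scheme \<Rightarrow> ('g \<Rightarrow> 'a) \<Rightarrow> 'g word set \<Rightarrow> 'a" where
  "presentation_lift H f C = word_eval H f (SOME w. w \<in> C)"

locale presentation_assignment =
  target: group H for H :: "('a, 'm) monoid_scheme" +
  fixes X :: "'g set" and R :: "'g word set" and f :: "'g \<Rightarrow> 'a"
  assumes closed: "\<And>x. x \<in> X \<Longrightarrow> f x \<in> carrier H"
    and relators: "\<And>r. r \<in> R \<Longrightarrow> r \<in> words_on X \<Longrightarrow> word_eval H f r = \<one>\<^bsub>H\<^esub>"
begin

lemma word_eval_closed: "w \<in> words_on X \<Longrightarrow> word_eval H f w \<in> carrier H"
  using closed by (intro target.word_eval_closed) (auto simp: words_on_def)

lemma word_eval_append: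
  "u \<in> words_on X \<Longrightarrow> v \<in> words_on X \<Longrightarrow> word_eval H f (u @ v) = word_eval H f u \<otimes>\<^bsub>H\<^esub> word_eval H f v"
  using closed by (intro target.word_eval_append) (auto simp: words_on_def)

lemma word_eval_pres_eq: "(u, v) \<in> pres_eq X R \<Longrightarrow> word_eval H f u = word_eval H f v"
proof (induct rule: pres_eq.induct)
  case (cancel u v x b)
  then have "f x \<in> carrier H" and "word_eval H f v \<in> carrier H"
    using closed word_eval_closed by auto
  then have "word_eval H f ((x, b) # (x, \<not> b) # v) = word_eval H f v"
    by (cases b) (simp_all flip: target.m_assoc)
  with cancel show ?case
    by (simp add: word_eval_append)
next
  case (rel u v r)
  then show ?case
    by (simp add: word_eval_append relators word_eval_closed)
qed auto

lemma lift_class: "w \<in> words_on X \<Longrightarrow> presentation_lift H f (pres_eq X R `` {w}) = word_eval H f w"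
  unfolding presentation_lift_def
  by (rule someI2[of "\<lambda>w'. w' \<in> pres_eq X R `` {w}"])
    (auto intro: pres_eq.refl word_eval_pres_eq[symmetric])

lemma lift_hom: "presentation_lift H f \<in> hom (presented_group X R) H"
  unfolding hom_def
  by (auto elim!: carrier_presented_groupE
      simp: mult_presented_group_class lift_class word_eval_closed word_eval_append)

end

section \<open>A model of the dihedral group\<close>

text \<open>The pair \<open>(b, r)\<close> stands for \<open>s\<^sup>b t\<^sup>r\<close> with \<open>0 \<le> r < n\<close>;
  multiplication uses \<open>t\<^sup>r s = s t\<^sup>-\<^sup>r\<close>.\<close>
definition dihedral_model :: "nat \<Rightarrow> (bool \<times> int) monoid" where
  "dihedral_model n =
     \<lparr>carrier = {(b, r). 0 \<le> r \<and> r < int n},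
      mult = (\<lambda>x y. (fst x \<noteq> fst y, ((if fst y then - snd x else snd x) + snd y) mod int n)),
      one = (False, 0)\<rparr>"

lemma carrier_dihedral_model: "carrier (dihedral_model n) = {(b, r). 0 \<le> r \<and> r < int n}"
  by (simp add: dihedral_model_def)

lemma one_dihedral_model: "\<one>\<^bsub>dihedral_model n\<^esub> = (False, 0)"
  by (simp add: dihedral_model_def)

lemma mult_dihedral_model:
  "x \<otimes>\<^bsub>dihedral_model n\<^esub> y =
   (fst x \<noteq> fst y, ((if fst y then - snd x else snd x) + snd y) mod int n)"
  by (simp add: dihedral_model_def)

lemma group_dihedral_model:
  assumes "0 < n"
  shows "group (dihedral_model n)"
proof (rule groupI)
  fix x assume x: "x \<in> carrier (dihedral_model n)"
  let ?y = "(fst x, if fst x then snd x else - snd x mod int n)"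
  have "?y \<in> carrier (dihedral_model n)"
    using assms x by (auto simp: carrier_dihedral_model)
  moreover have "?y \<otimes>\<^bsub>dihedral_model n\<^esub> x = \<one>\<^bsub>dihedral_model n\<^esub>"
    by (auto simp: mult_dihedral_model one_dihedral_model mod_simps)
  ultimately show "\<exists>y \<in> carrier (dihedral_model n). y \<otimes>\<^bsub>dihedral_model n\<^esub> x = \<one>\<^bsub>dihedral_model n\<^esub>"
    by blast
qed (use assms in \<open>auto simp: carrier_dihedral_model mult_dihedral_model one_dihedral_model
    mod_simps algebra_simps\<close>)

lemma finite_carrier_dihedral_model: "finite (carrier (dihedral_model n))"
  by (rule finite_subset[of _ "UNIV \<times> {0..<int n}"]) (auto simp: carrier_dihedral_model)

lemma dihedral_model_rotation_pow:
  "(False, 1) [^]\<^bsub>dihedral_model n\<^esub> (k :: nat) = (False, int k mod int n)"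
proof (induct k)
  case (Suc k)
  then show ?case
    by (simp add: mult_dihedral_model mod_add_left_eq mod_add_right_eq ac_simps)
qed (simp add: one_dihedral_model)

lemma fst_pow_dihedral_model: "fst (x [^]\<^bsub>dihedral_model n\<^esub> (k :: nat)) \<longleftrightarrow> fst x \<and> odd k"
proof (induct k)
  case (Suc k)
  then show ?case
    by (cases "fst x") (simp_all add: mult_dihedral_model)
qed (simp add: one_dihedral_model)

lemma odd_dvd_double_imp_zero:
  fixes z :: int
  assumes "odd n" and "int n dvd 2 * z" and "\<bar>z\<bar> < int n"
  shows "z = 0"
proof (rule ccontr)
  assume "z \<noteq> 0"
  moreover have "int n dvd z"
    using assms(1,2) by (simp add: coprime_dvd_mult_right_iff)
  ultimately have "\<bar>int n\<bar> \<le> \<bar>z\<bar>"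
    by (rule dvd_imp_le_int)
  with assms(3) show False
    by simp
qed

lemma dihedral_model_involution:
  assumes "odd n" and "x \<in> carrier (dihedral_model n)"
    and "x \<otimes>\<^bsub>dihedral_model n\<^esub> x = \<one>\<^bsub>dihedral_model n\<^esub>"
  shows "x = \<one>\<^bsub>dihedral_model n\<^esub> \<or> fst x"
proof -
  obtain b r where x: "x = (b, r)"
    by (cases x)
  show ?thesis
  proof (cases b)
    case False
    with assms(3) x have "(r + r) mod int n = 0"
      by (simp add: mult_dihedral_model one_dihedral_model)
    then have "int n dvd 2 * r"
      by (metis mod_eq_0_iff_dvd mult_2)
    then have "r = 0"
      using assms(1,2) x by (intro odd_dvd_double_imp_zero) (auto simp: carrier_dihedral_model)
    with False x show ?thesis
      by (simp add: one_dihedral_model)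
  qed (simp add: x)
qed

lemma dihedral_model_commuting_reflections:
  assumes "odd n" and "x \<in> carrier (dihedral_model n)" and "y \<in> carrier (dihedral_model n)"
    and "fst x" and "fst y" and "x \<otimes>\<^bsub>dihedral_model n\<^esub> y = y \<otimes>\<^bsub>dihedral_model n\<^esub> x"
  shows "x = y"
proof -
  have "(- snd x + snd y) mod int n = (- snd y + snd x) mod int n"
    using assms(4-6) by (simp add: mult_dihedral_model)
  then have "int n dvd (- snd x + snd y) - (- snd y + snd x)"
    by (simp only: mod_eq_dvd_iff)
  also have "(- snd x + snd y) - (- snd y + snd x) = 2 * (snd y - snd x)"
    by simp
  finally have "snd y - snd x = 0"
    using assms(1-3) by (intro odd_dvd_double_imp_zero) (auto simp: carrier_dihedral_model)
  with assms(4,5) show ?thesis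
    by (simp add: prod_eq_iff)
qed

definition dihedral_nf :: "('a, 'm) monoid_scheme \<Rightarrow> 'a \<Rightarrow> 'a \<Rightarrow> bool \<times> int \<Rightarrow> 'a" where
  "dihedral_nf K s t x = (if fst x then s else \<one>\<^bsub>K\<^esub>) \<otimes>\<^bsub>K\<^esub> t [^]\<^bsub>K\<^esub> snd x"

lemma (in group) dihedral_nf_closed:
  "s \<in> carrier G \<Longrightarrow> t \<in> carrier G \<Longrightarrow> dihedral_nf G s t x \<in> carrier G"
  by (simp add: dihedral_nf_def)

lemma (in group) dihedral_nf_gens [simp]:
  "s \<in> carrier G \<Longrightarrow> dihedral_nf G s t (True, 0) = s"
  "t \<in> carrier G \<Longrightarrow> dihedral_nf G s t (False, 1) = t"
  by (simp_all add: dihedral_nf_def)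

locale dihedral_pair = group +
  fixes n :: nat and s t
  assumes s_closed [simp]: "s \<in> carrier G" and t_closed [simp]: "t \<in> carrier G"
    and s_s: "s \<otimes> s = \<one>" and t_pow_n: "t [^] n = \<one>" and s_t_s_t: "s \<otimes> (t \<otimes> (s \<otimes> t)) = \<one>"
begin

lemma s_s_cancel [simp]: "x \<in> carrier G \<Longrightarrow> s \<otimes> (s \<otimes> x) = x"
  by (simp flip: m_assoc add: s_s)

lemma t_int_pow_mod: "t [^] (i mod int n) = t [^] i"
proof -
  have "t [^] i = (t [^] int n) [^] (i div int n) \<otimes> t [^] (i mod int n)"
    by (simp add: int_pow_pow flip: int_pow_mult)
  then show ?thesis
    by (simp add: int_pow_int t_pow_n)
qed

lemma t_int_pow_s: "t [^] (i :: int) \<otimes> s = s \<otimes> t [^] (- i)"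
proof -
  let ?conj = "\<lambda>x. s \<otimes> x \<otimes> s"
  have conj_hom: "?conj \<in> hom G G"
    by (auto simp: hom_def m_assoc)
  have "?conj (t [^] i) = ?conj t [^] i"
    by (rule hom_int_pow[OF conj_hom t_closed is_group is_group])
  also have "?conj t = inv t"
    using s_t_s_t by (intro inv_equality[symmetric]) (simp_all add: m_assoc)
  finally have "s \<otimes> t [^] i \<otimes> s = t [^] (- i)"
    by (simp add: int_pow_inv int_pow_neg)
  then show ?thesis
    by (metis m_assoc s_closed s_s_cancel int_pow_closed t_closed m_closed)
qed

lemma dihedral_nf_mult:
  "dihedral_nf G s t (x \<otimes>\<^bsub>dihedral_model n\<^esub> y) = dihedral_nf G s t x \<otimes> dihedral_nf G s t y"
proof (cases "fst y")
  case True
  have "t [^] snd x \<otimes> (s \<otimes> t [^] snd y) = (t [^] snd x \<otimes> s) \<otimes> t [^] snd y"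
    by (simp add: m_assoc)
  also have "\<dots> = s \<otimes> (t [^] (- snd x) \<otimes> t [^] snd y)"
    by (simp add: t_int_pow_s m_assoc)
  also have "\<dots> = s \<otimes> t [^] (- snd x + snd y)"
    by (simp only: int_pow_mult[OF t_closed])
  finally have "t [^] snd x \<otimes> (s \<otimes> t [^] snd y) = s \<otimes> t [^] (- snd x + snd y)" .
  with True show ?thesis
    by (simp add: dihedral_nf_def mult_dihedral_model t_int_pow_mod m_assoc s_s)
next
  case False
  then show ?thesis
    by (simp add: dihedral_nf_def mult_dihedral_model t_int_pow_mod m_assoc int_pow_mult)
qed

lemma dihedral_nf_hom: "dihedral_nf G s t \<in> hom (dihedral_model n) G"
  unfolding hom_def by (auto simp: dihedral_nf_closed dihedral_nf_mult)

end

lemma hom_dihedral_nf: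
  assumes "group K" and "group H" and "h \<in> hom K H" and "s \<in> carrier K" and "t \<in> carrier K"
  shows "h (dihedral_nf K s t x) = dihedral_nf H (h s) (h t) x"
proof -
  interpret group_hom K H h
    using assms by (simp add: group_hom_def group_hom_axioms_def)
  show ?thesis
    using assms(4,5) by (simp add: dihedral_nf_def hom_int_pow)
qed

lemma dihedral_nf_dihedral_model:
  assumes "x \<in> carrier (dihedral_model n)"
  shows "dihedral_nf (dihedral_model n) (True, 0) (False, 1) x = x"
proof -
  have "(False, 1) [^]\<^bsub>dihedral_model n\<^esub> snd x = (False, snd x mod int n)"
    using assms dihedral_model_rotation_pow[of n "nat (snd x)"]
    by (auto simp: carrier_dihedral_model simp flip: pow_nat)
  with assms show ?thesis
    by (auto simp: dihedral_nf_def carrier_dihedral_model mult_dihedral_model one_dihedral_model)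
qed

section \<open>The presented dihedral group is isomorphic to the model\<close>

definition dihedral_rels :: "nat \<Rightarrow> dgen word set" where
  "dihedral_rels n = {[(S, True), (S, True)], replicate n (T, True),
     [(S, True), (T, True), (S, True), (T, True)]}"

lemma dihedral_eq: "dihedral n = presented_group {S, T} (dihedral_rels n)"
  by (simp add: dihedral_def dihedral_rels_def)

lemma dconst_eq: "dconst n c = pres_eq {S, T} (dihedral_rels n) `` {[(c, True)]}"
  by (simp add: dconst_def dihedral_rels_def)

lemma words_on_dgen [simp]: "w \<in> words_on {S, T}"
proof -
  have "c \<in> {S, T}" for c
    by (cases c) auto
  then show ?thesis
    by (simp add: words_on_def)
qed

lemma group_dihedral: "group (dihedral n)"
  by (simp add: dihedral_eq group_presented_group)

lemma dconst_closed [simp]: "dconst n c \<in> carrier (dihedral n)"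
  by (simp add: dihedral_eq dconst_eq class_in_carrier_presented_group)

lemma word_eval_dconst:
  "word_eval (dihedral n) (dconst n) w = pres_eq {S, T} (dihedral_rels n) `` {w}"
  using word_eval_generator_classes[of w "{S, T}" "dihedral_rels n"]
  by (simp add: dihedral_eq dconst_eq[abs_def])

lemma dihedral_pair_dconst: "dihedral_pair (dihedral n) n (dconst n S) (dconst n T)"
proof -
  interpret group "dihedral n"
    by (rule group_dihedral)
  have rel: "word_eval (dihedral n) (dconst n) r = \<one>\<^bsub>dihedral n\<^esub>" if "r \<in> dihedral_rels n" for r
    using word_eval_dconst[of n r] relator_class_eq_one[OF that words_on_dgen]
    by (simp add: dihedral_eq)
  show ?thesis
    using rel[of "[(S, True), (S, True)]"] rel[of "replicate n (T, True)"]
      rel[of "[(S, True), (T, True), (S, True), (T, True)]"]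
    by unfold_locales (simp_all add: dihedral_rels_def word_eval_replicate)
qed

fun dihedral_model_gen :: "dgen \<Rightarrow> bool \<times> int" where
  "dihedral_model_gen S = (True, 0)"
| "dihedral_model_gen T = (False, 1)"

lemma dihedral_model_gen_closed: "1 < n \<Longrightarrow> dihedral_model_gen c \<in> carrier (dihedral_model n)"
  by (cases c) (simp_all add: carrier_dihedral_model)

lemma presentation_assignment_dihedral_model:
  assumes "1 < n"
  shows "presentation_assignment (dihedral_model n) {S, T} (dihedral_rels n) dihedral_model_gen"
proof -
  interpret group "dihedral_model n"
    using assms by (simp add: group_dihedral_model)
  have "word_eval (dihedral_model n) dihedral_model_gen (replicate n (T, True)) = \<one>\<^bsub>dihedral_model n\<^esub>"
    using dihedral_model_gen_closed[OF assms, of T]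
    by (simp add: word_eval_replicate dihedral_model_rotation_pow one_dihedral_model)
  then show ?thesis
    using assms dihedral_model_gen_closed
    by unfold_locales (auto simp: dihedral_rels_def mult_dihedral_model one_dihedral_model)
qed

definition dihedral_to_model :: "nat \<Rightarrow> dgen word set \<Rightarrow> bool \<times> int" where
  "dihedral_to_model n = presentation_lift (dihedral_model n) dihedral_model_gen"

definition model_to_dihedral :: "nat \<Rightarrow> bool \<times> int \<Rightarrow> dgen word set" where
  "model_to_dihedral n = dihedral_nf (dihedral n) (dconst n S) (dconst n T)"

lemma dihedral_to_model_hom: "1 < n \<Longrightarrow> dihedral_to_model n \<in> hom (dihedral n) (dihedral_model n)"
  unfolding dihedral_to_model_def dihedral_eq
  by (rule presentation_assignment.lift_hom[OF presentation_assignment_dihedral_model])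

lemma dihedral_to_model_dconst:
  assumes "1 < n"
  shows "dihedral_to_model n (dconst n c) = dihedral_model_gen c"
proof -
  interpret group "dihedral_model n"
    using assms by (simp add: group_dihedral_model)
  show ?thesis
    using presentation_assignment.lift_class[OF presentation_assignment_dihedral_model[OF assms],
        of "[(c, True)]"] dihedral_model_gen_closed[OF assms]
    by (simp add: dihedral_to_model_def dconst_eq)
qed

lemma model_to_dihedral_hom: "model_to_dihedral n \<in> hom (dihedral_model n) (dihedral n)"
  unfolding model_to_dihedral_def
  by (rule dihedral_pair.dihedral_nf_hom[OF dihedral_pair_dconst])

lemma model_to_dihedral_gen: "model_to_dihedral n (dihedral_model_gen c) = dconst n c"
proof -
  interpret group "dihedral n"
    by (rule group_dihedral)
  show ?thesis
    by (cases c) (simp_all add: model_to_dihedral_def)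
qed

lemma dihedral_to_model_to_dihedral:
  assumes "1 < n" and "C \<in> carrier (dihedral n)"
  shows "model_to_dihedral n (dihedral_to_model n C) = C"
proof -
  obtain w where C: "C = pres_eq {S, T} (dihedral_rels n) `` {w}"
    using assms(2) by (auto simp: dihedral_eq elim: carrier_presented_groupE)
  have "model_to_dihedral n \<circ> dihedral_to_model n \<in> hom (dihedral n) (dihedral n)"
    using hom_compose[OF dihedral_to_model_hom[OF assms(1)] model_to_dihedral_hom] .
  then have "(model_to_dihedral n \<circ> dihedral_to_model n) C =
      word_eval (dihedral n) (\<lambda>c. model_to_dihedral n (dihedral_to_model n (dconst n c))) w"
    unfolding C dconst_eq dihedral_eq
    by (subst hom_presented_group_class) (simp_all add: group_presented_group)
  also have "\<dots> = C"
    using assms(1) by (simp add: dihedral_to_model_dconst model_to_dihedral_gen word_eval_dconst C)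
  finally show ?thesis
    by simp
qed

lemma model_to_dihedral_to_model:
  assumes "1 < n" and "x \<in> carrier (dihedral_model n)"
  shows "dihedral_to_model n (model_to_dihedral n x) = x"
  using hom_dihedral_nf[OF group_dihedral group_dihedral_model dihedral_to_model_hom, of n]
    dihedral_nf_dihedral_model[OF assms(2)] assms
  by (simp add: model_to_dihedral_def dihedral_to_model_dconst)

lemma dihedral_to_model_closed:
  "1 < n \<Longrightarrow> C \<in> carrier (dihedral n) \<Longrightarrow> dihedral_to_model n C \<in> carrier (dihedral_model n)"
  by (rule hom_in_carrier[OF dihedral_to_model_hom])

lemma model_to_dihedral_closed:
  "x \<in> carrier (dihedral_model n) \<Longrightarrow> model_to_dihedral n x \<in> carrier (dihedral n)"
  by (rule hom_in_carrier[OF model_to_dihedral_hom])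

lemma dihedral_to_model_image:
  assumes "1 < n"
  shows "dihedral_to_model n ` carrier (dihedral n) = carrier (dihedral_model n)"
proof
  show "dihedral_to_model n ` carrier (dihedral n) \<subseteq> carrier (dihedral_model n)"
    using dihedral_to_model_closed[OF assms] by auto
  show "carrier (dihedral_model n) \<subseteq> dihedral_to_model n ` carrier (dihedral n)"
    using model_to_dihedral_to_model[OF assms] model_to_dihedral_closed
    by (metis image_eqI subsetI)
qed

lemma model_to_dihedral_image:
  assumes "1 < n"
  shows "model_to_dihedral n ` carrier (dihedral_model n) = carrier (dihedral n)"
proof
  show "model_to_dihedral n ` carrier (dihedral_model n) \<subseteq> carrier (dihedral n)"
    using model_to_dihedral_closed by auto
  show "carrier (dihedral n) \<subseteq> model_to_dihedral n ` carrier (dihedral_model n)"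
    using dihedral_to_model_to_dihedral[OF assms] dihedral_to_model_closed[OF assms]
    by (metis image_eqI subsetI)
qed

lemma surj_hom_dihedral_iff_model:
  assumes "1 < n"
  shows "(\<exists>\<phi>. \<phi> \<in> hom K (dihedral n) \<and> \<phi> ` carrier K = carrier (dihedral n)) \<longleftrightarrow>
    (\<exists>\<psi>. \<psi> \<in> hom K (dihedral_model n) \<and> \<psi> ` carrier K = carrier (dihedral_model n))"
proof
  assume "\<exists>\<phi>. \<phi> \<in> hom K (dihedral n) \<and> \<phi> ` carrier K = carrier (dihedral n)"
  then obtain \<phi> where "\<phi> \<in> hom K (dihedral n)" and "\<phi> ` carrier K = carrier (dihedral n)"
    by blast
  then show "\<exists>\<psi>. \<psi> \<in> hom K (dihedral_model n) \<and> \<psi> ` carrier K = carrier (dihedral_model n)"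
    using assms image_comp[of "dihedral_to_model n" \<phi> "carrier K"]
    by (intro exI[of _ "dihedral_to_model n \<circ> \<phi>"])
      (simp add: hom_compose dihedral_to_model_hom dihedral_to_model_image)
next
  assume "\<exists>\<psi>. \<psi> \<in> hom K (dihedral_model n) \<and> \<psi> ` carrier K = carrier (dihedral_model n)"
  then obtain \<psi> where "\<psi> \<in> hom K (dihedral_model n)" and "\<psi> ` carrier K = carrier (dihedral_model n)"
    by blast
  then show "\<exists>\<phi>. \<phi> \<in> hom K (dihedral n) \<and> \<phi> ` carrier K = carrier (dihedral n)"
    using assms image_comp[of "model_to_dihedral n" \<psi> "carrier K"]
    by (intro exI[of _ "model_to_dihedral n \<circ> \<psi>"])
      (simp add: hom_compose model_to_dihedral_hom model_to_dihedral_image)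
qed

definition eqn_letters :: "nat \<Rightarrow> ((dgen + nat) \<times> bool) set" where
  "eqn_letters k =
     {(Inl S, True), (Inl T, True), (Inl T, False)} \<union> {(Inr j, b) | j b. 1 \<le> j \<and> j \<le> k}"

definition is_model_solution :: "nat \<Rightarrow> nat \<Rightarrow> (nat \<Rightarrow> eqn) \<Rightarrow> (nat \<Rightarrow> bool \<times> int) \<Rightarrow> bool" where
  "is_model_solution n m u H \<longleftrightarrow>
     (\<forall>i \<in> {1..m}. word_eval (dihedral_model n) (case_sum dihedral_model_gen H) (u i) =
        \<one>\<^bsub>dihedral_model n\<^esub>)"

lemma dihedral_equation_iff_model:
  assumes "1 < n" and "set w \<subseteq> eqn_letters k"
    and "\<forall>j \<in> {1..k}. h j \<in> carrier (dihedral n) \<and> dihedral_to_model n (h j) = H j"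
  shows "word_eval (dihedral n) (case_sum (dconst n) h) w = \<one>\<^bsub>dihedral n\<^esub> \<longleftrightarrow>
    word_eval (dihedral_model n) (case_sum dihedral_model_gen H) w = \<one>\<^bsub>dihedral_model n\<^esub>"
proof -
  let ?\<iota> = "dihedral_to_model n" and ?e = "word_eval (dihedral n) (case_sum (dconst n) h) w"
  have closed: "\<forall>l \<in> set w. case_sum (dconst n) h (fst l) \<in> carrier (dihedral n)"
    using assms(2,3) by (auto simp: eqn_letters_def)
  have "?\<iota> ?e = word_eval (dihedral_model n) (?\<iota> \<circ> case_sum (dconst n) h) w"
    using assms(1)
    by (intro word_eval_hom group_dihedral group_dihedral_model dihedral_to_model_hom closed) auto
  also have "\<dots> = word_eval (dihedral_model n) (case_sum dihedral_model_gen H) w"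
    using assms by (intro word_eval_cong) (auto simp: eqn_letters_def dihedral_to_model_dconst)
  finally have \<iota>_e: "?\<iota> ?e = word_eval (dihedral_model n) (case_sum dihedral_model_gen H) w" .
  have one: "?\<iota> \<one>\<^bsub>dihedral n\<^esub> = \<one>\<^bsub>dihedral_model n\<^esub>"
    using assms(1) by (intro hom_one dihedral_to_model_hom group_dihedral group_dihedral_model) auto
  have "?e \<in> carrier (dihedral n)"
    using closed by (rule group.word_eval_closed[OF group_dihedral])
  then have "?e = \<one>\<^bsub>dihedral n\<^esub> \<longleftrightarrow> ?\<iota> ?e = ?\<iota> \<one>\<^bsub>dihedral n\<^esub>"
    using dihedral_to_model_to_dihedral[OF assms(1)] monoid.one_closed[OF group.is_monoid[OF group_dihedral]]
    by metis
  then show ?thesis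
    by (simp add: \<iota>_e one)
qed

lemma solution_iff_model:
  assumes "1 < n" and "\<forall>i \<in> {1..m}. set (u i) \<subseteq> eqn_letters k"
  shows "(\<exists>h. (\<forall>j \<in> {1..k}. h j \<in> carrier (dihedral n)) \<and> is_solution n m u h) \<longleftrightarrow>
    (\<exists>H. (\<forall>j \<in> {1..k}. H j \<in> carrier (dihedral_model n)) \<and> is_model_solution n m u H)"
proof
  assume "\<exists>h. (\<forall>j \<in> {1..k}. h j \<in> carrier (dihedral n)) \<and> is_solution n m u h"
  then obtain h where h: "\<forall>j \<in> {1..k}. h j \<in> carrier (dihedral n)" and "is_solution n m u h"
    by blast
  moreover have "\<forall>j \<in> {1..k}. dihedral_to_model n (h j) \<in> carrier (dihedral_model n)"
    using h dihedral_to_model_closed[OF assms(1)] by auto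
  ultimately show "\<exists>H. (\<forall>j \<in> {1..k}. H j \<in> carrier (dihedral_model n)) \<and> is_model_solution n m u H"
    using dihedral_equation_iff_model[OF assms(1), of _ k h "dihedral_to_model n \<circ> h"] assms(2)
    by (intro exI[of _ "dihedral_to_model n \<circ> h"]) (auto simp: is_solution_def is_model_solution_def)
next
  assume "\<exists>H. (\<forall>j \<in> {1..k}. H j \<in> carrier (dihedral_model n)) \<and> is_model_solution n m u H"
  then obtain H where H: "\<forall>j \<in> {1..k}. H j \<in> carrier (dihedral_model n)" and "is_model_solution n m u H"
    by blast
  moreover have "\<forall>j \<in> {1..k}. model_to_dihedral n (H j) \<in> carrier (dihedral n)
      \<and> dihedral_to_model n (model_to_dihedral n (H j)) = H j"
    using H model_to_dihedral_closed model_to_dihedral_to_model[OF assms(1)] by auto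
  ultimately show "\<exists>h. (\<forall>j \<in> {1..k}. h j \<in> carrier (dihedral n)) \<and> is_solution n m u h"
    using dihedral_equation_iff_model[OF assms(1), of _ k "model_to_dihedral n \<circ> H" H] assms(2)
    by (intro exI[of _ "model_to_dihedral n \<circ> H"]) (auto simp: is_solution_def is_model_solution_def)
qed

definition Go_gens :: "nat \<Rightarrow> nat \<Rightarrow> ogen set" where
  "Go_gens n k = {A, Dg} \<union> Ggens n k"

definition Go_rels :: "nat \<Rightarrow> nat \<Rightarrow> nat \<Rightarrow> (nat \<Rightarrow> eqn) \<Rightarrow> ogen word set" where
  "Go_rels n k m u = {[(A, True), (A, True)], replicate n (Dg, True),
       [(A, True), (Dg, True), (A, True), (Dg, True)]}
      \<union> {tr_word n (u i) | i. i \<in> {1..m}}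
      \<union> {commw g g' | g g'. g \<in> Ggens n k \<and> g' \<in> Ggens n k}
      \<union> {commw g A | g. g \<in> Ggens n k}
      \<union> {[(g, True), (g, True)] | g. g \<in> Ggens n k}"

lemma Go_eq: "Go n k m u = presented_group (Go_gens n k) (Go_rels n k m u)"
  by (simp add: Go_def Go_gens_def Go_rels_def)

lemma Go_gens_cases: "x \<in> Go_gens n k \<Longrightarrow> x = A \<or> x = Dg \<or> x \<in> Ggens n k"
  by (auto simp: Go_gens_def)

lemma Go_rels_memI:
  "[(A, True), (A, True)] \<in> Go_rels n k m u"
  "replicate n (Dg, True) \<in> Go_rels n k m u"
  "[(A, True), (Dg, True), (A, True), (Dg, True)] \<in> Go_rels n k m u"
  "i \<in> {1..m} \<Longrightarrow> tr_word n (u i) \<in> Go_rels n k m u"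
  "g \<in> Ggens n k \<Longrightarrow> g' \<in> Ggens n k \<Longrightarrow> commw g g' \<in> Go_rels n k m u"
  "g \<in> Ggens n k \<Longrightarrow> commw g A \<in> Go_rels n k m u"
  "g \<in> Ggens n k \<Longrightarrow> [(g, True), (g, True)] \<in> Go_rels n k m u"
  unfolding Go_rels_def by blast+

lemma Xword_words_on: "1 \<le> j \<Longrightarrow> j \<le> k \<Longrightarrow> Xword n j \<in> words_on (Go_gens n k)"
  by (auto simp: Xword_def words_on_def Go_gens_def Ggens_def)

lemma tr_letter_words_on:
  assumes "l \<in> eqn_letters k"
  shows "tr_letter n l \<in> words_on (Go_gens n k)"
  using assms Xword_words_on[of _ k n]
  by (cases "snd l") (auto simp: eqn_letters_def Go_gens_def)

lemma tr_word_words_on: "set w \<subseteq> eqn_letters k \<Longrightarrow> tr_word n w \<in> words_on (Go_gens n k)"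
  using tr_letter_words_on by (force simp: tr_word_def words_on_def)

lemma (in group) word_eval_tr_word:
  assumes closed: "\<forall>x \<in> Go_gens n k. f x \<in> carrier G"
    and "F (Inl S) = f A" and "F (Inl T) = f Dg"
    and "\<And>j. 1 \<le> j \<Longrightarrow> j \<le> k \<Longrightarrow> F (Inr j) = word_eval G f (Xword n j)"
    and "set w \<subseteq> eqn_letters k"
  shows "word_eval G f (tr_word n w) = word_eval G F w"
proof -
  have "(\<forall>l' \<in> set (tr_letter n l). f (fst l') \<in> carrier G) \<and> F (fst l) \<in> carrier G
      \<and> word_eval G f (tr_letter n l) = (if snd l then F (fst l) else inv (F (fst l)))"
    if "l \<in> set w" for l
  proof -
    have l: "l \<in> eqn_letters k"
      using that assms(5) by blast
    have gens_closed: "f A \<in> carrier G" "f Dg \<in> carrier G"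
      using closed by (auto simp: Go_gens_def)
    have Xword_closed: "\<forall>l' \<in> set (Xword n j). f (fst l') \<in> carrier G" if "1 \<le> j" "j \<le> k" for j
      using Xword_words_on[OF that, of n] closed by (auto simp: words_on_def)
    then have Xword_inv_closed: "\<forall>l' \<in> set (word_inv (Xword n j)). f (fst l') \<in> carrier G"
      if "1 \<le> j" "j \<le> k" for j
      using that by (intro letters_word_inv)
    consider "l = (Inl S, True)" | "l = (Inl T, True)" | "l = (Inl T, False)"
      | j where "l = (Inr j, True)" and "1 \<le> j" and "j \<le> k"
      | j where "l = (Inr j, False)" and "1 \<le> j" and "j \<le> k"
      using l by (auto simp: eqn_letters_def)
    then show ?thesis
      using assms(2-4) gens_closed Xword_closed Xword_inv_closed
      by cases (simp_all add: word_eval_closed word_eval_word_inv)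
  qed
  then show ?thesis
    unfolding tr_word_def by (intro word_eval_concat_map) blast
qed

section \<open>From a solution to a surjection\<close>

lemma inv_dihedral_model_zero: "0 < n \<Longrightarrow> inv\<^bsub>dihedral_model n\<^esub> (b, 0) = (b, 0)"
  by (intro group.inv_equality group_dihedral_model)
    (auto simp: mult_dihedral_model one_dihedral_model carrier_dihedral_model)

lemma sum_list_signs:
  "(\<Sum>i \<leftarrow> [1..<N + 1]. if i \<le> q then - 1 else 1 :: int) = int N - 2 * int (min q N)"
  by (induct N) auto

lemma exists_signed_count:
  assumes "odd n" and "0 \<le> r" and "r < int n"
  shows "\<exists>q \<le> n. (int n - 2 * int q) mod int n = r"
proof (cases "odd r")
  case True
  then have "int n - 2 * int (nat ((int n - r) div 2)) = r"
    using assms by (auto elim!: oddE)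
  then show ?thesis
    using assms by (intro exI[of _ "nat ((int n - r) div 2)"]) auto
next
  case False
  then have "(int n - 2 * int (n - nat (r div 2))) mod int n = (r - int n) mod int n"
    using assms by (auto elim!: evenE)
  also have "(r - int n) mod int n = r"
    using assms by (simp add: mod_diff_right_eq[symmetric])
  finally show ?thesis
    using diff_le_self by blast
qed

lemma word_eval_conjugates_dihedral_model:
  assumes "0 < n" and "g Dg = (False, 1)" and "\<forall>i \<in> set xs. g (G i j) = (c i, 0)"
  shows "word_eval (dihedral_model n) g (concat (map (\<lambda>i. [(G i j, True), (Dg, True), (G i j, False)]) xs))
    = (False, (\<Sum>i \<leftarrow> xs. if c i then - 1 else 1) mod int n)"
  using assms(3)
proof (induct xs)
  case (Cons i xs)
  then show ?case
    using assms(1,2)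
    by (cases "c i") (simp_all add: inv_dihedral_model_zero mult_dihedral_model mod_simps algebra_simps)
qed (simp add: one_dihedral_model)

lemma word_eval_Xword_dihedral_model:
  assumes "0 < n" and "g Dg = (False, 1)" and "g (G 0 j) = (b, 0)"
    and "\<forall>i \<in> {1..n}. g (G i j) = (i \<le> q, 0)" and "q \<le> n"
  shows "word_eval (dihedral_model n) g (Xword n j) = (b, (int n - 2 * int q) mod int n)"
proof -
  let ?w = "concat (map (\<lambda>i. [(G i j, True), (Dg, True), (G i j, False)]) [1..<n + 1])"
  have "word_eval (dihedral_model n) g ?w =
      (False, (\<Sum>i \<leftarrow> [1..<n + 1]. if i \<le> q then - 1 else 1) mod int n)"
    by (rule word_eval_conjugates_dihedral_model[where c = "\<lambda>i. i \<le> q"]) (use assms in auto)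
  also have "(\<Sum>i \<leftarrow> [1..<n + 1]. if i \<le> q then - 1 else 1 :: int) = int n - 2 * int q"
    by (simp only: sum_list_signs min_absorb1[OF assms(5)])
  finally have "word_eval (dihedral_model n) g ?w = (False, (int n - 2 * int q) mod int n)" .
  then show ?thesis
    unfolding Xword_def word_eval_Cons using assms(3) by (simp add: mult_dihedral_model)
qed

lemma surj_hom_dihedral_model:
  assumes "group K" and "0 < n" and hom: "\<psi> \<in> hom K (dihedral_model n)"
    and "a \<in> carrier K" and "d \<in> carrier K" and "\<psi> a = (True, 0)" and "\<psi> d = (False, 1)"
  shows "\<psi> ` carrier K = carrier (dihedral_model n)"
proof
  show "\<psi> ` carrier K \<subseteq> carrier (dihedral_model n)"
    using hom by (auto simp: hom_in_carrier)
  show "carrier (dihedral_model n) \<subseteq> \<psi> ` carrier K"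
  proof
    fix x assume x: "x \<in> carrier (dihedral_model n)"
    have "x = \<psi> (dihedral_nf K a d x)"
      using hom_dihedral_nf[OF assms(1) group_dihedral_model[OF assms(2)] hom assms(4,5)]
        dihedral_nf_dihedral_model[OF x] assms(6,7) by simp
    moreover have "dihedral_nf K a d x \<in> carrier K"
      using assms(4,5) by (rule group.dihedral_nf_closed[OF assms(1)])
    ultimately show "x \<in> \<psi> ` carrier K"
      by blast
  qed
qed

lemma presentation_assignment_Go_dihedral_model:
  assumes "1 < n" and letters: "\<forall>i \<in> {1..m}. set (u i) \<subseteq> eqn_letters k"
    and g_A: "g A = (True, 0)" and g_Dg: "g Dg = (False, 1)"
    and g_Ggens: "\<forall>x \<in> Ggens n k. \<exists>b. g x = (b, 0)"
    and g_Xword: "\<forall>j \<in> {1..k}. word_eval (dihedral_model n) g (Xword n j) = H j"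
    and solution: "is_model_solution n m u H"
  shows "presentation_assignment (dihedral_model n) (Go_gens n k) (Go_rels n k m u) g"
proof -
  interpret M: group "dihedral_model n"
    using assms(1) by (simp add: group_dihedral_model)
  have g_closed: "\<forall>x \<in> Go_gens n k. g x \<in> carrier (dihedral_model n)"
    using assms(1) g_A g_Dg g_Ggens by (auto simp: Go_gens_def carrier_dihedral_model)
  show ?thesis
  proof (unfold_locales, use g_closed in blast)
    fix r assume "r \<in> Go_rels n k m u"
    then consider "r = [(A, True), (A, True)]" | "r = replicate n (Dg, True)"
      | "r = [(A, True), (Dg, True), (A, True), (Dg, True)]"
      | i where "i \<in> {1..m}" and "r = tr_word n (u i)"
      | x y where "r = commw x y" and "x \<in> Ggens n k" and "y \<in> Ggens n k \<or> y = A"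
      | x where "r = [(x, True), (x, True)]" and "x \<in> Ggens n k"
      unfolding Go_rels_def by blast
    then show "word_eval (dihedral_model n) g r = \<one>\<^bsub>dihedral_model n\<^esub>"
    proof cases
      case 2
      then show ?thesis
        using M.word_eval_replicate[of g Dg n] g_closed
        by (simp add: Go_gens_def g_Dg dihedral_model_rotation_pow one_dihedral_model)
    next
      case (4 i)
      have "word_eval (dihedral_model n) g (tr_word n (u i)) =
          word_eval (dihedral_model n) (case_sum dihedral_model_gen H) (u i)"
        using g_closed g_Xword letters 4(1) g_A g_Dg by (intro M.word_eval_tr_word[where k = k]) auto
      with 4 solution show ?thesis
        by (simp add: is_model_solution_def)
    next
      case (5 x y)
      obtain b where "g x = (b, 0)"
        using g_Ggens 5(2) by blast
      moreover obtain c where "g y = (c, 0)"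
        using g_Ggens g_A 5(3) by auto
      ultimately show ?thesis
        using assms(1) 5(1)
        by (simp add: commw_def inv_dihedral_model_zero mult_dihedral_model one_dihedral_model) blast
    next
      case (6 x)
      then obtain b where "g x = (b, 0)"
        using g_Ggens by blast
      with 6(1) show ?thesis
        by (simp add: mult_dihedral_model one_dihedral_model)
    qed (simp_all add: g_A g_Dg mult_dihedral_model one_dihedral_model mod_diff_left_eq)
  qed
qed

lemma surj_hom_Go_dihedral_model_of_solution:
  assumes "odd n" and "1 < n" and letters: "\<forall>i \<in> {1..m}. set (u i) \<subseteq> eqn_letters k"
    and H_closed: "\<forall>j \<in> {1..k}. H j \<in> carrier (dihedral_model n)"
    and solution: "is_model_solution n m u H"
  shows "\<exists>\<psi>. \<psi> \<in> hom (Go n k m u) (dihedral_model n) \<and>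
    \<psi> ` carrier (Go n k m u) = carrier (dihedral_model n)"
proof -
  have "\<forall>j \<in> {1..k}. \<exists>q \<le> n. (int n - 2 * int q) mod int n = snd (H j)"
    using exists_signed_count[OF assms(1)] H_closed by (auto simp: carrier_dihedral_model)
  then obtain q where q: "\<forall>j \<in> {1..k}. q j \<le> n \<and> (int n - 2 * int (q j)) mod int n = snd (H j)"
    by metis
  define g :: "ogen \<Rightarrow> bool \<times> int" where "g x = (case x of A \<Rightarrow> (True, 0) | Dg \<Rightarrow> (False, 1)
      | G i j \<Rightarrow> (if i = 0 then fst (H j) else i \<le> q j, 0))" for x
  have "word_eval (dihedral_model n) g (Xword n j) = H j" if "j \<in> {1..k}" for j
    using word_eval_Xword_dihedral_model[of n g j "fst (H j)" "q j"] q that assms(2)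
    by (simp add: g_def)
  moreover have "\<forall>x \<in> Ggens n k. \<exists>b. g x = (b, 0)"
    by (auto simp: Ggens_def g_def)
  ultimately interpret presentation_assignment "dihedral_model n" "Go_gens n k" "Go_rels n k m u" g
    using assms(2) letters solution
    by (intro presentation_assignment_Go_dihedral_model) (simp_all add: g_def)
  have gens: "[(A, True)] \<in> words_on (Go_gens n k)" "[(Dg, True)] \<in> words_on (Go_gens n k)"
    by (simp_all add: Go_gens_def)
  have "presentation_lift (dihedral_model n) g ` carrier (Go n k m u) = carrier (dihedral_model n)"
    unfolding Go_eq
    using assms(2) lift_class[OF gens(1)] lift_class[OF gens(2)]
    by (intro surj_hom_dihedral_model[OF group_presented_group _ lift_hom
          class_in_carrier_presented_group[OF gens(1)] class_in_carrier_presented_group[OF gens(2)]])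
      (simp_all add: g_def carrier_dihedral_model)
  with lift_hom show ?thesis
    unfolding Go_eq by blast
qed

section \<open>From a surjection to a solution\<close>

lemma dihedral_model_generators_reflection:
  assumes "odd n" and "1 < n"
    and closed: "\<alpha> \<in> carrier (dihedral_model n)" "\<delta> \<in> carrier (dihedral_model n)"
      "\<Gamma> \<subseteq> carrier (dihedral_model n)"
    and "\<alpha> \<otimes>\<^bsub>dihedral_model n\<^esub> \<alpha> = \<one>\<^bsub>dihedral_model n\<^esub>"
    and "\<delta> [^]\<^bsub>dihedral_model n\<^esub> n = \<one>\<^bsub>dihedral_model n\<^esub>"
    and "\<alpha> \<otimes>\<^bsub>dihedral_model n\<^esub> (\<delta> \<otimes>\<^bsub>dihedral_model n\<^esub> (\<alpha> \<otimes>\<^bsub>dihedral_model n\<^esub> \<delta>)) =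
      \<one>\<^bsub>dihedral_model n\<^esub>"
    and \<Gamma>_sq: "\<forall>\<gamma> \<in> \<Gamma>. \<gamma> \<otimes>\<^bsub>dihedral_model n\<^esub> \<gamma> = \<one>\<^bsub>dihedral_model n\<^esub>"
    and \<Gamma>_comm: "\<forall>\<gamma> \<in> \<Gamma>. \<forall>\<gamma>' \<in> \<Gamma>. \<gamma> \<otimes>\<^bsub>dihedral_model n\<^esub> \<gamma>' = \<gamma>' \<otimes>\<^bsub>dihedral_model n\<^esub> \<gamma>"
    and generate: "generate (dihedral_model n) (insert \<alpha> (insert \<delta> \<Gamma>)) = carrier (dihedral_model n)"
  shows "fst \<alpha>"
proof (rule ccontr)
  interpret M: group "dihedral_model n"
    using assms(2) by (simp add: group_dihedral_model)
  assume "\<not> fst \<alpha>"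
  then have \<alpha>: "\<alpha> = \<one>\<^bsub>dihedral_model n\<^esub>"
    using dihedral_model_involution[OF assms(1) closed(1)] assms(6) by blast
  have "\<not> fst \<delta>"
    using fst_pow_dihedral_model[where x = \<delta> and n = n and k = n] assms(1,7)
    by (simp add: one_dihedral_model)
  moreover have "\<delta> \<otimes>\<^bsub>dihedral_model n\<^esub> \<delta> = \<one>\<^bsub>dihedral_model n\<^esub>"
    using assms(8) closed(2) by (simp add: \<alpha>)
  ultimately have \<delta>: "\<delta> = \<one>\<^bsub>dihedral_model n\<^esub>"
    using dihedral_model_involution[OF assms(1) closed(2)] by blast
  text \<open>With \<open>\<alpha> = \<delta> = 1\<close>, everything lies in the subgroup of order at most two spanned by the
    reflections in \<open>\<Gamma>\<close>, which commute and hence coincide.\<close>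
  let ?K = "insert \<one>\<^bsub>dihedral_model n\<^esub> {\<gamma> \<in> \<Gamma>. fst \<gamma>}"
  have reflections_eq: "\<gamma> = \<gamma>'" if "\<gamma> \<in> \<Gamma>" "\<gamma>' \<in> \<Gamma>" "fst \<gamma>" "fst \<gamma>'" for \<gamma> \<gamma>'
    using dihedral_model_commuting_reflections[OF assms(1)] that closed(3) \<Gamma>_comm by blast
  have "subgroup ?K (dihedral_model n)"
  proof (rule M.subgroupI)
    show "?K \<subseteq> carrier (dihedral_model n)"
      using closed(3) by auto
    show "inv\<^bsub>dihedral_model n\<^esub> a \<in> ?K" if "a \<in> ?K" for a
      using that closed(3) \<Gamma>_sq M.inv_equality by fastforce
    show "a \<otimes>\<^bsub>dihedral_model n\<^esub> b \<in> ?K" if "a \<in> ?K" and "b \<in> ?K" for a b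
    proof (cases "a = \<one>\<^bsub>dihedral_model n\<^esub> \<or> b = \<one>\<^bsub>dihedral_model n\<^esub>")
      case True
      with that closed(3) show ?thesis
        by auto
    next
      case False
      with that have "a = b"
        using reflections_eq[of a b] by blast
      with that False \<Gamma>_sq show ?thesis
        by auto
    qed
  qed simp
  moreover have "insert \<alpha> (insert \<delta> \<Gamma>) \<subseteq> ?K"
    using \<alpha> \<delta> \<Gamma>_sq closed(3) dihedral_model_involution[OF assms(1)] by blast
  ultimately have "carrier (dihedral_model n) \<subseteq> ?K"
    using M.generate_subgroup_incl generate by metis
  moreover have "(False, 1) \<in> carrier (dihedral_model n)"
    using assms(2) by (simp add: carrier_dihedral_model)
  ultimately show False
    by (auto simp: one_dihedral_model)
qed

lemma (in group) commute_of_commw: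
  assumes "x \<in> carrier G" and "y \<in> carrier G"
    and "word_eval G f (commw a b) = \<one>" and "f a = x" and "f b = y"
  shows "x \<otimes> y = y \<otimes> x"
proof -
  have "x \<otimes> y \<otimes> inv (y \<otimes> x) = \<one>"
    using assms by (simp add: commw_def inv_mult_group m_assoc)
  then show ?thesis
    using assms(1,2) by (simp add: inv_solve_right')
qed

locale Go_hom = target: group K for K :: "('a, 'm) monoid_scheme" +
  fixes n k m :: nat and u :: "nat \<Rightarrow> eqn" and \<psi>
  assumes hom: "\<psi> \<in> hom (Go n k m u) K"
begin

abbreviation gen_image :: "ogen \<Rightarrow> 'a" where
  "gen_image x \<equiv> \<psi> (pres_eq (Go_gens n k) (Go_rels n k m u) `` {[(x, True)]})"

lemma gen_image_closed: "x \<in> Go_gens n k \<Longrightarrow> gen_image x \<in> carrier K"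
  using hom_in_carrier[OF hom[unfolded Go_eq] class_in_carrier_presented_group[of "[(x, True)]"]]
  by simp

lemma relator_gen_image:
  "r \<in> Go_rels n k m u \<Longrightarrow> r \<in> words_on (Go_gens n k) \<Longrightarrow> word_eval K gen_image r = \<one>\<^bsub>K\<^esub>"
  using hom by (intro hom_presented_group_relator target.is_group) (simp_all add: Go_eq)

lemma dihedral_pair_gen_image: "dihedral_pair K n (gen_image A) (gen_image Dg)"
proof -
  have AD: "A \<in> Go_gens n k" "Dg \<in> Go_gens n k"
    by (simp_all add: Go_gens_def)
  then show ?thesis
    using relator_gen_image[OF Go_rels_memI(1)] relator_gen_image[OF Go_rels_memI(2)]
      relator_gen_image[OF Go_rels_memI(3)] gen_image_closed
    by unfold_locales (simp_all add: target.word_eval_replicate words_on_def)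
qed

lemma gen_image_Ggens_sq:
  "g \<in> Ggens n k \<Longrightarrow> gen_image g \<otimes>\<^bsub>K\<^esub> gen_image g = \<one>\<^bsub>K\<^esub>"
  using relator_gen_image[OF Go_rels_memI(7)] gen_image_closed by (simp add: Go_gens_def)

lemma gen_image_Ggens_comm:
  assumes "g \<in> Ggens n k" and "g' \<in> insert A (Ggens n k)"
  shows "gen_image g \<otimes>\<^bsub>K\<^esub> gen_image g' = gen_image g' \<otimes>\<^bsub>K\<^esub> gen_image g"
proof (rule target.commute_of_commw)
  have "insert A (Ggens n k) \<subseteq> Go_gens n k"
    by (auto simp: Go_gens_def)
  with assms show "gen_image g \<in> carrier K" and "gen_image g' \<in> carrier K"
    by (auto intro: gen_image_closed)
  have "commw g g' \<in> Go_rels n k m u"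
    using assms Go_rels_memI(5,6) by blast
  with \<open>insert A (Ggens n k) \<subseteq> Go_gens n k\<close> assms
  show "word_eval K gen_image (commw g g') = \<one>\<^bsub>K\<^esub>"
    by (intro relator_gen_image) (auto simp: commw_def)
qed simp_all

end

locale Go_onto_dihedral_model = Go_hom "dihedral_model n" n k m u \<psi> for n k m u \<psi> +
  assumes odd: "odd n" and n_gt_1: "1 < n"
    and surj: "\<psi> ` carrier (Go n k m u) = carrier (dihedral_model n)"
begin

sublocale D: dihedral_pair "dihedral_model n" n "gen_image A" "gen_image Dg"
  by (rule dihedral_pair_gen_image)

abbreviation \<theta> :: "bool \<times> int \<Rightarrow> bool \<times> int" where
  "\<theta> \<equiv> dihedral_nf (dihedral_model n) (gen_image A) (gen_image Dg)"

sublocale \<theta>: group_hom "dihedral_model n" "dihedral_model n" \<theta>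
  by unfold_locales (rule D.dihedral_nf_hom)

lemma generate_gen_image:
  "generate (dihedral_model n) (gen_image ` Go_gens n k) = carrier (dihedral_model n)"
  using generate_surj_hom_presented_group[OF target.is_group] hom surj by (simp add: Go_eq)

lemma fst_gen_image_A: "fst (gen_image A)"
  using odd n_gt_1 generate_gen_image gen_image_closed gen_image_Ggens_sq gen_image_Ggens_comm
    D.s_s D.t_pow_n D.s_t_s_t
  by (intro dihedral_model_generators_reflection[where \<Gamma> = "gen_image ` Ggens n k"])
    (auto simp: Go_gens_def)

lemma gen_image_Ggens:
  assumes "g \<in> Ggens n k"
  shows "gen_image g \<in> {\<one>\<^bsub>dihedral_model n\<^esub>, gen_image A}"
proof -
  have closed: "gen_image g \<in> carrier (dihedral_model n)" "gen_image A \<in> carrier (dihedral_model n)"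
    using assms gen_image_closed by (auto simp: Go_gens_def)
  have "gen_image g = \<one>\<^bsub>dihedral_model n\<^esub> \<or> fst (gen_image g)"
    by (rule dihedral_model_involution[OF odd closed(1) gen_image_Ggens_sq[OF assms]])
  moreover have "gen_image g = gen_image A" if "fst (gen_image g)"
    using dihedral_model_commuting_reflections[OF odd closed that fst_gen_image_A]
      gen_image_Ggens_comm[OF assms, of A] by simp
  ultimately show ?thesis
    by blast
qed

lemma \<theta>_image: "\<theta> ` carrier (dihedral_model n) = carrier (dihedral_model n)"
proof -
  have A_image: "gen_image A \<in> \<theta> ` carrier (dihedral_model n)"
    by (rule rev_image_eqI[of "(True, 0)"])
      (use n_gt_1 D.s_closed in \<open>simp_all add: carrier_dihedral_model\<close>)
  have Dg_image: "gen_image Dg \<in> \<theta> ` carrier (dihedral_model n)"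
    by (rule rev_image_eqI[of "(False, 1)"])
      (use n_gt_1 D.t_closed in \<open>simp_all add: carrier_dihedral_model\<close>)
  have one_image: "\<one>\<^bsub>dihedral_model n\<^esub> \<in> \<theta> ` carrier (dihedral_model n)"
    using \<theta>.hom_one target.one_closed by (metis image_eqI)
  have gens_image: "gen_image ` Go_gens n k \<subseteq> \<theta> ` carrier (dihedral_model n)"
  proof (rule image_subsetI)
    fix x assume "x \<in> Go_gens n k"
    then consider "x = A" | "x = Dg" | "x \<in> Ggens n k"
      using Go_gens_cases by blast
    then show "gen_image x \<in> \<theta> ` carrier (dihedral_model n)"
    proof cases
      case 3
      then have "gen_image x = \<one>\<^bsub>dihedral_model n\<^esub> \<or> gen_image x = gen_image A"
        using gen_image_Ggens by blast
      with one_image A_image show ?thesis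
        by metis
    qed (simp_all add: A_image Dg_image)
  qed
  have "carrier (dihedral_model n) \<subseteq> \<theta> ` carrier (dihedral_model n)"
    using target.generate_subgroup_incl[OF gens_image \<theta>.img_is_subgroup] generate_gen_image by simp
  then show ?thesis
    using \<theta>.hom_closed by blast
qed

lemma inj_on_\<theta>: "inj_on \<theta> (carrier (dihedral_model n))"
  using finite_carrier_dihedral_model by (intro eq_card_imp_inj_on) (simp_all add: \<theta>_image)

lemma exists_model_solution:
  assumes letters: "\<forall>i \<in> {1..m}. set (u i) \<subseteq> eqn_letters k"
  shows "\<exists>H. (\<forall>j \<in> {1..k}. H j \<in> carrier (dihedral_model n)) \<and> is_model_solution n m u H"
proof -
  define H where "H j = inv_into (carrier (dihedral_model n)) \<theta>
    (\<psi> (pres_eq (Go_gens n k) (Go_rels n k m u) `` {Xword n j}))" for j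
  have H: "H j \<in> carrier (dihedral_model n) \<and>
      \<theta> (H j) = word_eval (dihedral_model n) gen_image (Xword n j)" if "j \<in> {1..k}" for j
  proof -
    have Xword: "Xword n j \<in> words_on (Go_gens n k)"
      using that Xword_words_on by auto
    then have "\<psi> (pres_eq (Go_gens n k) (Go_rels n k m u) `` {Xword n j}) \<in> carrier (dihedral_model n)"
      using hom_in_carrier[OF hom[unfolded Go_eq]] class_in_carrier_presented_group by blast
    then show ?thesis
      using \<theta>_image hom_presented_group_class[OF target.is_group hom[unfolded Go_eq] Xword]
      by (simp add: H_def inv_into_into f_inv_into_f)
  qed
  have "word_eval (dihedral_model n) (case_sum dihedral_model_gen H) (u i) = \<one>\<^bsub>dihedral_model n\<^esub>"
    if i: "i \<in> {1..m}" for i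
  proof -
    let ?F = "case_sum dihedral_model_gen H"
    have F_closed: "\<forall>l \<in> set (u i). ?F (fst l) \<in> carrier (dihedral_model n)"
    proof
      fix l assume "l \<in> set (u i)"
      then have "l \<in> eqn_letters k"
        using letters i by blast
      then show "?F (fst l) \<in> carrier (dihedral_model n)"
        using H dihedral_model_gen_closed[OF n_gt_1]
        by (auto simp: eqn_letters_def simp del: dihedral_model_gen.simps)
    qed
    have "\<theta> (word_eval (dihedral_model n) ?F (u i)) = word_eval (dihedral_model n) (\<theta> \<circ> ?F) (u i)"
      by (rule word_eval_hom[OF target.is_group target.is_group D.dihedral_nf_hom F_closed])
    also have "\<dots> = word_eval (dihedral_model n) gen_image (tr_word n (u i))"
      using gen_image_closed H letters i n_gt_1
      by (intro target.word_eval_tr_word[where k = k, symmetric]) (auto simp: Go_gens_def)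
    also have "\<dots> = \<theta> \<one>\<^bsub>dihedral_model n\<^esub>"
      using relator_gen_image[OF Go_rels_memI(4)[OF i] tr_word_words_on] letters i by simp
    finally show ?thesis
      using inj_onD[OF inj_on_\<theta>] target.word_eval_closed[OF F_closed] by blast
  qed
  with H show ?thesis
    unfolding is_model_solution_def by blast
qed

end

lemma solution_of_surj_hom_Go_dihedral_model:
  assumes "odd n" and "1 < n" and "\<forall>i \<in> {1..m}. set (u i) \<subseteq> eqn_letters k"
    and "\<psi> \<in> hom (Go n k m u) (dihedral_model n)"
    and "\<psi> ` carrier (Go n k m u) = carrier (dihedral_model n)"
  shows "\<exists>H. (\<forall>j \<in> {1..k}. H j \<in> carrier (dihedral_model n)) \<and> is_model_solution n m u H"
proof -
  interpret Go_onto_dihedral_model n k m u \<psi>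
    by (intro Go_onto_dihedral_model.intro Go_hom.intro Go_hom_axioms.intro
        Go_onto_dihedral_model_axioms.intro group_dihedral_model) (use assms in auto)
  show ?thesis
    using assms(3) by (rule exists_model_solution)
qed

theorem lemma7p10:
  fixes n k m :: nat and u :: "nat \<Rightarrow> eqn"
  assumes "odd n" and "n > 1"
    and "\<forall>i \<in> {1..m}. set (u i) \<subseteq>
           {(Inl S, True), (Inl T, True), (Inl T, False)} \<union> {(Inr j, b) | j b. 1 \<le> j \<and> j \<le> k}"
  shows "(\<exists>\<phi>. \<phi> \<in> hom (Go n k m u) (dihedral n) \<and> \<phi> ` carrier (Go n k m u) = carrier (dihedral n))
     \<longleftrightarrow> (\<exists>h. (\<forall>j \<in> {1..k}. h j \<in> carrier (dihedral n)) \<and> is_solution n m u h)"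
proof -
  have letters: "\<forall>i \<in> {1..m}. set (u i) \<subseteq> eqn_letters k"
    using assms(3) unfolding eqn_letters_def .
  have "(\<exists>\<phi>. \<phi> \<in> hom (Go n k m u) (dihedral n) \<and> \<phi> ` carrier (Go n k m u) = carrier (dihedral n))
      \<longleftrightarrow> (\<exists>\<psi>. \<psi> \<in> hom (Go n k m u) (dihedral_model n) \<and>
        \<psi> ` carrier (Go n k m u) = carrier (dihedral_model n))"
    by (rule surj_hom_dihedral_iff_model[OF assms(2)])
  also have "\<dots> \<longleftrightarrow> (\<exists>H. (\<forall>j \<in> {1..k}. H j \<in> carrier (dihedral_model n)) \<and> is_model_solution n m u H)"
    using solution_of_surj_hom_Go_dihedral_model[OF assms(1,2) letters]
      surj_hom_Go_dihedral_model_of_solution[OF assms(1,2) letters] by blast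
  also have "\<dots> \<longleftrightarrow> (\<exists>h. (\<forall>j \<in> {1..k}. h j \<in> carrier (dihedral n)) \<and> is_solution n m u h)"
    by (rule solution_iff_model[OF assms(2) letters, symmetric])
  finally show ?thesis .
qed

end
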